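(* Let $p\ge 1$, $\alpha\in(0,1)$, $\varepsilon>0$ and $g\in\mathbb{R}^p$ with $g\neq 0$. Let $m$ be an index with $|g_m|=\max_d|g_d|$ and let $I_{12}$ be the $p\times p$ diagonal matrix with $(I_{12})_{dd}=1$ if $|g_d|\ge \alpha|g_m|$ and $0$ otherwise. Let $q_1:=\left(\|I_{12}g\|_1/\|I_{12}g\|_2\right)^2$ and $$c_{\alpha,\varepsilon}(q_1):=\left(\frac{\sqrt{2\alpha\sqrt{q_1(\alpha^2q_1 + 4\varepsilon(1-\alpha))} + q_1((1-\alpha)^3-2\alpha^2)} - (1-\alpha)\sqrt{q_1(1-\alpha)}}{\alpha\sqrt{4\varepsilon(1-\alpha)}}\right)^2.$$ If $$\Delta x_{12,c,\varepsilon}:=-I_{12}g\left(\frac{\alpha\, c_{\alpha,\varepsilon}(q_1)\,\varepsilon}{\|I_{12}g\|_1}+\frac{(1-\alpha)\sqrt{c_{\alpha,\varepsilon}(q_1)\,\varepsilon}}{\|I_{12}g\|_2}\right),$$ then $h_\alpha(\Delta x_{12,c,\varepsilon})=\varepsilon$, where $h_\alpha(v):=\alpha\|v\|_1+(1-\alpha)\|v\|_2^2$.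
   Context: $\varepsilon$ is the step size in the general stagewise procedure; $I_{12}$ selects the coordinates whose absolute gradient is at least $\alpha$ times the maximal absolute gradient. *)

theory Defs
  imports "HOL-Analysis.Analysis"
begin

definition l1norm :: "real ^ 'n \<Rightarrow> real" where
  "l1norm v = (\<Sum>d\<in>UNIV. \<bar>v $ d\<bar>)"

definition l2norm :: "real ^ 'n \<Rightarrow> real" where
  "l2norm v = sqrt (\<Sum>d\<in>UNIV. (v $ d)^2)"

definition I12 :: "real \<Rightarrow> real ^ 'n \<Rightarrow> 'n \<Rightarrow> real ^ 'n ^ 'n" where
  "I12 \<alpha> g m = (\<chi> i j. if i = j \<and> \<bar>g $ i\<bar> \<ge> \<alpha> * \<bar>g $ m\<bar> then 1 else 0)"

definition c_ae :: "real \<Rightarrow> real \<Rightarrow> real \<Rightarrow> real" where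
  "c_ae \<alpha> \<epsilon> q1 =
     ((sqrt (2 * \<alpha> * sqrt (q1 * (\<alpha>^2 * q1 + 4 * \<epsilon> * (1 - \<alpha>))) + q1 * ((1 - \<alpha>)^3 - 2 * \<alpha>^2))
        - (1 - \<alpha>) * sqrt (q1 * (1 - \<alpha>)))
      / (\<alpha> * sqrt (4 * \<epsilon> * (1 - \<alpha>))))^2"

definition h_alpha :: "real \<Rightarrow> real ^ 'n \<Rightarrow> real" where
  "h_alpha \<alpha> v = \<alpha> * l1norm v + (1 - \<alpha>) * (l2norm v)^2"

end

theory Submission
  imports Defs
begin

text \<open>Let \<open>v = I\<^sub>1\<^sub>2 g \<noteq> 0\<close> and \<open>r = \<parallel>v\<parallel>\<^sub>1 / \<parallel>v\<parallel>\<^sub>2 = sqrt q\<^sub>1\<close>. For a step \<open>-t v\<close> with \<open>t \<ge> 0\<close>,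
  \<open>h\<^sub>\<alpha>(-t v) = \<alpha> r y + (1 - \<alpha>) y\<^sup>2\<close> where \<open>y = t \<parallel>v\<parallel>\<^sub>2\<close>, so \<open>h\<^sub>\<alpha> = \<epsilon>\<close> exactly when \<open>y\<close> is the
  nonnegative root of \<open>(1 - \<alpha>) y\<^sup>2 + \<alpha> r y = \<epsilon>\<close>. With \<open>s = sqrt (c \<epsilon>)\<close> the step of the theorem
  has \<open>y = (\<alpha> s\<^sup>2 + (1 - \<alpha>) r s) / r\<close>, so it remains to see that \<open>s\<close> is the nonnegative root of
  \<open>\<alpha> s\<^sup>2 + (1 - \<alpha>) r s = r y\<close>: solving the two quadratics one after the other by the quadratic
  formula produces exactly the nested radicals in the definition of \<open>c\<close>.\<close>

lemma l1norm_scaleR: "l1norm (k *\<^sub>R v) = \<bar>k\<bar> * l1norm v"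
  by (simp add: l1norm_def abs_mult sum_distrib_left)

lemma l2norm_scaleR: "l2norm (k *\<^sub>R v) = \<bar>k\<bar> * l2norm v"
  by (simp add: l2norm_def power_mult_distrib sum_distrib_left[symmetric] real_sqrt_mult)

lemma l1norm_uminus: "l1norm (- v) = l1norm v"
  by (simp add: l1norm_def)

lemma l2norm_uminus: "l2norm (- v) = l2norm v"
  by (simp add: l2norm_def)

lemma l1norm_pos_iff: "0 < l1norm v \<longleftrightarrow> v \<noteq> 0"
  by (simp add: l1norm_def less_le sum_nonneg sum_nonneg_eq_0_iff vec_eq_iff)

lemma l2norm_pos_iff: "0 < l2norm v \<longleftrightarrow> v \<noteq> 0"
  by (simp add: l2norm_def less_le sum_nonneg sum_nonneg_eq_0_iff vec_eq_iff)

lemma quadratic_nonneg_root_exists: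
  fixes A B C :: real
  assumes "0 < A" and "0 \<le> B" and "0 \<le> C"
  shows "\<exists>x\<ge>0. A * x\<^sup>2 + B * x = C"
proof -
  define D where "D = sqrt (B\<^sup>2 + 4 * A * C)"
  have "B \<le> D"
    unfolding D_def by (rule real_le_rsqrt) (use assms in simp)
  moreover have "D\<^sup>2 = B\<^sup>2 + 4 * A * C"
    unfolding D_def using assms by simp
  ultimately show ?thesis
    using assms
    by (intro exI[of _ "(D - B) / (2 * A)"]) (auto simp: field_simps power2_eq_square)
qed

lemma sqrt_discriminant_eq:
  fixes A B C x :: real
  assumes "A * x\<^sup>2 + B * x = C" and "0 \<le> 2 * A * x + B"
  shows "sqrt (B\<^sup>2 + 4 * A * C) = 2 * A * x + B"
proof -
  have "B\<^sup>2 + 4 * A * C = (2 * A * x + B)\<^sup>2"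
    unfolding assms(1)[symmetric] by (simp add: algebra_simps power2_eq_square)
  then show ?thesis
    using assms(2) by simp
qed

lemma c_ae_mult_eq:
  fixes a e r y s :: real
  assumes "0 < a" and "a < 1" and "0 < e" and "0 < r" and "0 \<le> y" and "0 \<le> s"
    and y_root: "(1 - a) * y\<^sup>2 + a * r * y = e"
    and s_root: "a * s\<^sup>2 + (1 - a) * r * s = r * y"
  shows "c_ae a e (r\<^sup>2) * e = s\<^sup>2"
proof -
  have "sqrt ((a * r)\<^sup>2 + 4 * (1 - a) * e) = 2 * (1 - a) * y + a * r"
    by (rule sqrt_discriminant_eq) (use assms in simp_all)
  then have sqrt_outer: "sqrt (r\<^sup>2 * (a\<^sup>2 * r\<^sup>2 + 4 * e * (1 - a))) = r * (2 * (1 - a) * y + a * r)"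
    using \<open>0 < r\<close> by (simp add: real_sqrt_mult power_mult_distrib mult_ac)
  have s_square: "(2 * a * s + (1 - a) * r)\<^sup>2 = ((1 - a) * r)\<^sup>2 + 4 * a * (r * y)"
    unfolding s_root[symmetric] by (simp add: algebra_simps power2_eq_square)
  have radicand:
    "2 * a * sqrt (r\<^sup>2 * (a\<^sup>2 * r\<^sup>2 + 4 * e * (1 - a))) + r\<^sup>2 * ((1 - a) ^ 3 - 2 * a\<^sup>2)
      = (1 - a) * (2 * a * s + (1 - a) * r)\<^sup>2"
    unfolding sqrt_outer s_square by (simp add: algebra_simps power2_eq_square power3_eq_cube)
  have "sqrt ((1 - a) * (2 * a * s + (1 - a) * r)\<^sup>2) = sqrt (1 - a) * (2 * a * s + (1 - a) * r)"
    using assms by (simp add: real_sqrt_mult)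
  moreover have "sqrt (r\<^sup>2 * (1 - a)) = r * sqrt (1 - a)"
    using \<open>0 < r\<close> by (simp add: real_sqrt_mult)
  moreover have "sqrt (4 * e * (1 - a)) = 2 * sqrt e * sqrt (1 - a)"
    by (simp add: real_sqrt_mult real_sqrt_four)
  ultimately have "c_ae a e (r\<^sup>2) = (2 * a * s * sqrt (1 - a) / (a * (2 * sqrt e * sqrt (1 - a))))\<^sup>2"
    unfolding c_ae_def radicand by (simp add: algebra_simps)
  also have "\<dots> = s\<^sup>2 / e"
    using assms by (simp add: power_divide power_mult_distrib)
  finally show ?thesis
    using \<open>0 < e\<close> by simp
qed

lemma h_alpha_c_ae_step:
  fixes v :: "real ^ 'n" and a e :: real
  assumes "0 < a" and "a < 1" and "0 < e" and "v \<noteq> 0"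
  defines "c \<equiv> c_ae a e ((l1norm v / l2norm v)\<^sup>2)"
  shows "h_alpha a (- ((a * c * e / l1norm v + (1 - a) * sqrt (c * e) / l2norm v) *\<^sub>R v)) = e"
proof -
  define r where "r = l1norm v / l2norm v"
  define t where "t = a * c * e / l1norm v + (1 - a) * sqrt (c * e) / l2norm v"
  have "0 < l1norm v" and "0 < l2norm v"
    using \<open>v \<noteq> 0\<close> by (simp_all add: l1norm_pos_iff l2norm_pos_iff)
  then have "0 < r" and l1_eq: "l1norm v = r * l2norm v"
    by (simp_all add: r_def)
  obtain y where "0 \<le> y" and y_root: "(1 - a) * y\<^sup>2 + a * r * y = e"
    using quadratic_nonneg_root_exists[of "1 - a" "a * r" e] assms \<open>0 < r\<close> by auto
  obtain s where "0 \<le> s" and s_root: "a * s\<^sup>2 + (1 - a) * r * s = r * y"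
    using quadratic_nonneg_root_exists[of a "(1 - a) * r" "r * y"] assms \<open>0 < r\<close> \<open>0 \<le> y\<close>
    by auto
  have "c * e = s\<^sup>2"
    unfolding c_def r_def[symmetric]
    by (rule c_ae_mult_eq) (use assms \<open>0 < r\<close> \<open>0 \<le> y\<close> \<open>0 \<le> s\<close> y_root s_root in auto)
  then have "t * l2norm v = (a * s\<^sup>2 + (1 - a) * r * s) / r"
    unfolding t_def l1_eq using \<open>0 \<le> s\<close> \<open>0 < r\<close> \<open>0 < l2norm v\<close>
    by (simp add: field_simps power2_eq_square)
  then have t_l2: "t * l2norm v = y"
    unfolding s_root using \<open>0 < r\<close> by simp
  then have "0 \<le> t"
    using \<open>0 \<le> y\<close> \<open>0 < l2norm v\<close> by (metis zero_le_mult_iff not_less)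
  then have "h_alpha a (- (t *\<^sub>R v)) = a * r * (t * l2norm v) + (1 - a) * (t * l2norm v)\<^sup>2"
    unfolding h_alpha_def l1norm_uminus l2norm_uminus l1norm_scaleR l2norm_scaleR l1_eq
    by (simp add: power_mult_distrib)
  also have "\<dots> = e"
    unfolding t_l2 y_root[symmetric] by simp
  finally show ?thesis
    unfolding t_def .
qed

lemma I12_mult_vec_nth:
  "(I12 \<alpha> g m *v x) $ i = (if \<alpha> * \<bar>g $ m\<bar> \<le> \<bar>g $ i\<bar> then x $ i else 0)"
  by (auto simp: I12_def matrix_vector_mult_def if_distrib[of "\<lambda>t. t * _"] cong: if_cong)

lemma I12_mult_vec_self_nonzero:
  assumes "\<alpha> \<le> 1" and "g \<noteq> 0" and "\<forall>d. \<bar>g $ d\<bar> \<le> \<bar>g $ m\<bar>"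
  shows "I12 \<alpha> g m *v g \<noteq> 0"
proof -
  have "g $ m \<noteq> 0"
  proof
    assume "g $ m = 0"
    then have "g $ d = 0" for d
      using assms(3) by (metis abs_le_zero_iff abs_zero)
    then show False
      using assms(2) by (simp add: vec_eq_iff)
  qed
  moreover have "\<alpha> * \<bar>g $ m\<bar> \<le> \<bar>g $ m\<bar>"
    using mult_right_mono[OF \<open>\<alpha> \<le> 1\<close> abs_ge_zero] by simp
  ultimately have "(I12 \<alpha> g m *v g) $ m \<noteq> 0"
    by (simp add: I12_mult_vec_nth)
  then show ?thesis
    by auto
qed

theorem theorem4:
  fixes g :: "real ^ 'n" and \<alpha> \<epsilon> :: real and m :: 'n
  assumes "0 < \<alpha>" and "\<alpha> < 1" and "\<epsilon> > 0" and "g \<noteq> 0"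
    and "\<forall>d. \<bar>g $ d\<bar> \<le> \<bar>g $ m\<bar>"
  defines "Ig \<equiv> I12 \<alpha> g m *v g"
  defines "q1 \<equiv> (l1norm Ig / l2norm Ig)^2"
  defines "c \<equiv> c_ae \<alpha> \<epsilon> q1"
  defines "\<Delta>x \<equiv> - ((\<alpha> * c * \<epsilon> / l1norm Ig + (1 - \<alpha>) * sqrt (c * \<epsilon>) / l2norm Ig) *\<^sub>R Ig)"
  shows "h_alpha \<alpha> \<Delta>x = \<epsilon>"
proof -
  have "Ig \<noteq> 0"
    unfolding Ig_def using assms(2,4,5) by (intro I12_mult_vec_self_nonzero) simp_all
  then show ?thesis
    unfolding \<Delta>x_def c_def q1_def by (rule h_alpha_c_ae_step[OF assms(1-3)])
qed

end
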